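(* Fix a structure $\phi$ with nested prediction sets $C_{\phi,\lambda}(x)$ indexed by $\lambda\in\Lambda\subseteq\mathbb{R}$ (i.e. $\lambda_1\le\lambda_2$ implies $C_{\phi,\lambda_1}(x)\subseteq C_{\phi,\lambda_2}(x)$), and write $R(\lambda)=\mathbb{P}\{Y\notin C_{\phi,\lambda}(X)\}$. Let $\alpha\in(0,1)$ and $\lambda^\star=\inf\{\lambda:R(\lambda)\le\alpha\}$. Assume: (1) $R(\lambda)$ is continuous and strictly decreasing in a neighbourhood of $\lambda^\star$; (2) a sequence of random thresholds $\widehat{\lambda}_{\mathrm{DCO}}$ (indexed by sample size $m$) satisfies $\widehat{\lambda}_{\mathrm{DCO}}\xrightarrow{p}\lambda^\star$ as $m\to\infty$; (3) $\widehat{\lambda}_{\mathrm{CRC}}=\inf\{\lambda\in\Lambda:\widehat{R}_m(\lambda)+b_m(\lambda,\delta_m)\le\alpha\}$, where $\widehat{R}_m$ are random functions and $b_m(\lambda,\delta_m)\ge 0$ are random margins satisfying $\sup_{\lambda\in\Lambda}|\widehat{R}_m(\lambda)-R(\lambda)|\xrightarrow{p}0$ and $\sup_{\lambda\in\Lambda}b_m(\lambda,\delta_m)\xrightarrow{p}0$ as $m\to\infty$. Then $\widehat{\lambda}_{\mathrm{CRC}}-\widehat{\lambda}_{\mathrm{DCO}}\xrightarrow{p}0$.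
   Context: $(X,Y)$ is a random pair with values in $\mathcal{X}\times\mathcal{Y}$; $\delta_m\in(0,1)$ is a sequence of confidence parameters; $\xrightarrow{p}$ denotes convergence in probability as $m\to\infty$. *)

theory Defs
  imports "HOL-Probability.Probability"
begin

definition risk :: "('x \<times> 'y) measure \<Rightarrow> (real \<Rightarrow> 'x \<Rightarrow> 'y set) \<Rightarrow> real \<Rightarrow> real" where
  "risk P C l = measure P {p \<in> space P. snd p \<notin> C l (fst p)}"

definition conv_prob :: "'w measure \<Rightarrow> (nat \<Rightarrow> 'w \<Rightarrow> real) \<Rightarrow> real \<Rightarrow> bool" where
  "conv_prob M Z c \<longleftrightarrow> (\<forall>m. Z m \<in> borel_measurable M) \<and>
     (\<forall>e>0. (\<lambda>m. measure M {w \<in> space M. e < \<bar>Z m w - c\<bar>}) \<longlonglongrightarrow> 0)"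

text \<open>Convergence in probability to 0 of extended-real random variables (used for suprema).\<close>
definition conv_prob_zero_ereal :: "'w measure \<Rightarrow> (nat \<Rightarrow> 'w \<Rightarrow> ereal) \<Rightarrow> bool" where
  "conv_prob_zero_ereal M Z \<longleftrightarrow> (\<forall>m. Z m \<in> borel_measurable M) \<and>
     (\<forall>e>0. (\<lambda>m. measure M {w \<in> space M. ereal e < \<bar>Z m w\<bar>}) \<longlonglongrightarrow> 0)"

end

theory Submission
  imports Defs
begin

(* With probability tending to one the CRC criterion Rhat + b is uniformly within a small
   margin of the true risk R on Lam. Strict monotonicity of R near lamstar provides, for every
   e > 0, points lamstar - e <= lm and lp <= lamstar + e of Lam with R lm > alpha > R lp. On the
   good event lp is feasible for the CRC infimum while, R being antitone by nestedness, no point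
   left of lm is, so lamCRC is within e of lamstar. Thus lamCRC -> lamstar in probability, as
   does lamDCO by assumption, and the difference tends to 0. *)

lemma (in finite_measure) measure_tendsto_0_if_subset_Un:
  assumes "\<And>m. A m \<subseteq> B m \<union> D m" "\<And>m. B m \<in> sets M" "\<And>m. D m \<in> sets M"
    and "(\<lambda>m. measure M (B m)) \<longlonglongrightarrow> 0" "(\<lambda>m. measure M (D m)) \<longlonglongrightarrow> 0"
  shows "(\<lambda>m. measure M (A m)) \<longlonglongrightarrow> 0"
proof (rule tendsto_sandwich[where f = "\<lambda>_. 0"])
  have "measure M (A m) \<le> measure M (B m \<union> D m)" for m
    using assms(1-3) by (intro finite_measure_mono) auto
  also have "\<dots> m \<le> measure M (B m) + measure M (D m)" for m
    using assms(2,3) by (rule measure_Un_le)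
  finally show "\<forall>\<^sub>F m in sequentially. measure M (A m) \<le> measure M (B m) + measure M (D m)"
    by simp
  show "(\<lambda>m. measure M (B m) + measure M (D m)) \<longlonglongrightarrow> 0"
    using tendsto_add[OF assms(4,5)] by simp
qed auto

lemma conv_prob_diff:
  assumes "finite_measure M" "conv_prob M X c" "conv_prob M Y c"
  shows "conv_prob M (\<lambda>m w. X m w - Y m w) 0"
  unfolding conv_prob_def
proof (intro conjI allI impI)
  interpret finite_measure M by fact
  have X: "X m \<in> borel_measurable M" and Y: "Y m \<in> borel_measurable M" for m
    using assms(2,3) unfolding conv_prob_def by auto
  then show "(\<lambda>w. X m w - Y m w) \<in> borel_measurable M" for m
    by measurable
  fix e :: real
  assume "0 < e"
  then have "0 < e / 2" by simp
  show "(\<lambda>m. measure M {w \<in> space M. e < \<bar>X m w - Y m w - 0\<bar>}) \<longlonglongrightarrow> 0"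
  proof (rule measure_tendsto_0_if_subset_Un)
    show "{w \<in> space M. e < \<bar>X m w - Y m w - 0\<bar>} \<subseteq>
        {w \<in> space M. e / 2 < \<bar>X m w - c\<bar>} \<union> {w \<in> space M. e / 2 < \<bar>Y m w - c\<bar>}" for m
      by (auto simp: abs_if split: if_splits)
    show "{w \<in> space M. e / 2 < \<bar>X m w - c\<bar>} \<in> sets M"
      and "{w \<in> space M. e / 2 < \<bar>Y m w - c\<bar>} \<in> sets M" for m
      using X[of m] Y[of m] by measurable
    show "(\<lambda>m. measure M {w \<in> space M. e / 2 < \<bar>X m w - c\<bar>}) \<longlonglongrightarrow> 0"
      and "(\<lambda>m. measure M {w \<in> space M. e / 2 < \<bar>Y m w - c\<bar>}) \<longlonglongrightarrow> 0"
      using assms(2,3) \<open>0 < e / 2\<close> unfolding conv_prob_def by blast+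
  qed
qed

lemma le_if_not_abs_SUP_ereal_gt:
  assumes "\<not> ereal e < \<bar>SUP l\<in>A. ereal (f l)\<bar>" "l \<in> A"
  shows "f l \<le> e"
proof -
  have "ereal (f l) \<le> (SUP l\<in>A. ereal (f l))"
    using assms(2) by (rule SUP_upper)
  also have "\<dots> \<le> ereal e"
    using assms(1) by (cases "SUP l\<in>A. ereal (f l)") auto
  finally show ?thesis by simp
qed

lemma risk_antimono:
  assumes "prob_space P"
    and "\<And>l. l \<in> Lam \<Longrightarrow> {p \<in> space P. snd p \<notin> C l (fst p)} \<in> sets P"
    and "\<And>l1 l2 x. l1 \<in> Lam \<Longrightarrow> l2 \<in> Lam \<Longrightarrow> l1 \<le> l2 \<Longrightarrow> C l1 x \<subseteq> C l2 x"
    and "l1 \<in> Lam" "l2 \<in> Lam" "l1 \<le> l2"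
  shows "risk P C l2 \<le> risk P C l1"
proof -
  interpret prob_space P by fact
  show ?thesis
    unfolding risk_def using assms(2)[OF assms(4)] assms(3)[OF assms(4-6)]
    by (intro finite_measure_mono) auto
qed

definition crosses_level_at :: "(real \<Rightarrow> real) \<Rightarrow> real set \<Rightarrow> real \<Rightarrow> real \<Rightarrow> bool" where
  "crosses_level_at R Lam alpha t \<longleftrightarrow>
     (\<forall>e>0. \<exists>lm\<in>Lam. \<exists>lp\<in>Lam. t - e \<le> lm \<and> lp \<le> t + e \<and> alpha < R lm \<and> R lp < alpha)"

lemma crosses_level_at_Inf_sublevel:
  fixes R :: "real \<Rightarrow> real" and Lam :: "real set" and alpha :: real
  defines "S \<equiv> {l \<in> Lam. R l \<le> alpha}"
  assumes "S \<noteq> {}" "bdd_below S" "0 < d" "{Inf S - d <..< Inf S + d} \<subseteq> Lam"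
    and strict: "\<And>l1 l2. l1 \<in> {Inf S - d <..< Inf S + d} \<Longrightarrow> l2 \<in> {Inf S - d <..< Inf S + d} \<Longrightarrow>
      l1 < l2 \<Longrightarrow> R l2 < R l1"
  shows "crosses_level_at R Lam alpha (Inf S)"
  unfolding crosses_level_at_def
proof (intro allI impI)
  fix e :: real
  assume "0 < e"
  define e' where "e' = min e (d / 2)"
  have e': "0 < e'" "e' < d" "e' \<le> e"
    using \<open>0 < e\<close> \<open>0 < d\<close> unfolding e'_def by auto
  then have near: "Inf S - e' \<in> {Inf S - d <..< Inf S + d}" "Inf S + e' \<in> {Inf S - d <..< Inf S + d}"
    by auto
  obtain s where s: "s \<in> S" "s < Inf S + e'"
    using cInf_lessD[OF \<open>S \<noteq> {}\<close>, of "Inf S + e'"] \<open>0 < e'\<close> by auto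
  have "Inf S \<le> s"
    using s(1) \<open>bdd_below S\<close> by (rule cInf_lower)
  then have "R (Inf S + e') < R s"
    using strict[OF _ near(2) s(2)] near(2) s(2) e' by auto
  with s(1) have "R (Inf S + e') < alpha"
    unfolding S_def by simp
  moreover have "alpha < R (Inf S - e')"
  proof (rule ccontr)
    assume "\<not> alpha < R (Inf S - e')"
    then have "Inf S - e' \<in> S"
      using near(1) assms(5) unfolding S_def by auto
    then have "Inf S \<le> Inf S - e'"
      using \<open>bdd_below S\<close> by (rule cInf_lower)
    with \<open>0 < e'\<close> show False by simp
  qed
  ultimately show "\<exists>lm\<in>Lam. \<exists>lp\<in>Lam. Inf S - e \<le> lm \<and> lp \<le> Inf S + e \<and>
      alpha < R lm \<and> R lp < alpha"
    using near assms(5) e' by (intro bexI[of _ "Inf S - e'"] bexI[of _ "Inf S + e'"]) auto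
qed

lemma Inf_sublevel_perturbed_between:
  fixes R F :: "real \<Rightarrow> real"
  assumes antimono: "\<And>l1 l2. l1 \<in> Lam \<Longrightarrow> l2 \<in> Lam \<Longrightarrow> l1 \<le> l2 \<Longrightarrow> R l2 \<le> R l1"
    and close: "\<And>l. l \<in> Lam \<Longrightarrow> \<bar>F l - R l\<bar> \<le> eta"
    and "lm \<in> Lam" "alpha < R lm - eta" "lp \<in> Lam" "R lp + eta \<le> alpha"
  shows "lm \<le> Inf {l \<in> Lam. F l \<le> alpha}" "Inf {l \<in> Lam. F l \<le> alpha} \<le> lp"
proof -
  let ?T = "{l \<in> Lam. F l \<le> alpha}"
  have "lp \<in> ?T"
    using close[of lp] assms(5,6) by auto
  have left: "lm < t" if "t \<in> ?T" for t
  proof (rule ccontr)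
    assume "\<not> lm < t"
    then have "R lm \<le> R t"
      using antimono[of t lm] that \<open>lm \<in> Lam\<close> by auto
    then show False
      using that close[of t] \<open>alpha < R lm - eta\<close> by auto
  qed
  then have "bdd_below ?T"
    by (meson bdd_below.I less_imp_le)
  with \<open>lp \<in> ?T\<close> show "Inf ?T \<le> lp"
    by (intro cInf_lower)
  show "lm \<le> Inf ?T"
    using \<open>lp \<in> ?T\<close> left by (intro cInf_greatest) (auto intro: less_imp_le)
qed

lemma conv_prob_Inf_sublevel_estimate:
  fixes R :: "real \<Rightarrow> real"
    and Rhat b :: "nat \<Rightarrow> real \<Rightarrow> 'w \<Rightarrow> real"
    and Lam :: "real set" and alpha :: real
  defines "lamhat \<equiv> (\<lambda>m w. Inf {l \<in> Lam. Rhat m l w + b m l w \<le> alpha})"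
  assumes "finite_measure M"
    and antimono: "\<And>l1 l2. l1 \<in> Lam \<Longrightarrow> l2 \<in> Lam \<Longrightarrow> l1 \<le> l2 \<Longrightarrow> R l2 \<le> R l1"
    and crosses: "crosses_level_at R Lam alpha lamstar"
    and b_nonneg: "\<And>m l w. l \<in> Lam \<Longrightarrow> w \<in> space M \<Longrightarrow> 0 \<le> b m l w"
    and Rhat_conv: "conv_prob_zero_ereal M (\<lambda>m w. SUP l\<in>Lam. ereal \<bar>Rhat m l w - R l\<bar>)"
    and b_conv: "conv_prob_zero_ereal M (\<lambda>m w. SUP l\<in>Lam. ereal (b m l w))"
    and "\<And>m. lamhat m \<in> borel_measurable M"
  shows "conv_prob M lamhat lamstar"
  unfolding conv_prob_def
proof (intro conjI allI impI)
  interpret finite_measure M by fact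
  show "lamhat m \<in> borel_measurable M" for m by fact
  fix e :: real
  assume "0 < e"
  then obtain lm lp where lm: "lm \<in> Lam" "lamstar - e \<le> lm" "alpha < R lm"
    and lp: "lp \<in> Lam" "lp \<le> lamstar + e" "R lp < alpha"
    using crosses unfolding crosses_level_at_def by blast
  define eta where "eta = min (alpha - R lp) (R lm - alpha) / 4"
  have "0 < eta"
    using lm lp unfolding eta_def by simp
  have eta_le: "4 * eta \<le> alpha - R lp" "4 * eta \<le> R lm - alpha"
    unfolding eta_def by simp_all
  define bad_Rhat where
    "bad_Rhat m = {w \<in> space M. ereal eta < \<bar>SUP l\<in>Lam. ereal \<bar>Rhat m l w - R l\<bar>\<bar>}" for m
  define bad_b where
    "bad_b m = {w \<in> space M. ereal eta < \<bar>SUP l\<in>Lam. ereal (b m l w)\<bar>}" for m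
  have good: "\<bar>lamhat m w - lamstar\<bar> \<le> e"
    if "w \<in> space M" "w \<notin> bad_Rhat m" "w \<notin> bad_b m" for m w
  proof -
    have close: "\<bar>(Rhat m l w + b m l w) - R l\<bar> \<le> 2 * eta" if "l \<in> Lam" for l
    proof -
      have "\<bar>Rhat m l w - R l\<bar> \<le> eta"
        using \<open>w \<notin> bad_Rhat m\<close> \<open>w \<in> space M\<close> \<open>l \<in> Lam\<close> unfolding bad_Rhat_def
        by (intro le_if_not_abs_SUP_ereal_gt[where f = "\<lambda>l. \<bar>Rhat m l w - R l\<bar>"]) auto
      moreover have "b m l w \<le> eta"
        using \<open>w \<notin> bad_b m\<close> \<open>w \<in> space M\<close> \<open>l \<in> Lam\<close> unfolding bad_b_def
        by (intro le_if_not_abs_SUP_ereal_gt[where f = "\<lambda>l. b m l w"]) auto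
      moreover have "0 \<le> b m l w"
        using \<open>l \<in> Lam\<close> \<open>w \<in> space M\<close> by (rule b_nonneg)
      ultimately show ?thesis
        using \<open>0 < eta\<close> by linarith
    qed
    have "alpha < R lm - 2 * eta"
      using eta_le(2) lm(3) by linarith
    moreover have "R lp + 2 * eta \<le> alpha"
      using eta_le(1) lp(3) by linarith
    ultimately have "lm \<le> lamhat m w" "lamhat m w \<le> lp"
      unfolding lamhat_def using Inf_sublevel_perturbed_between[OF antimono close lm(1) _ lp(1)]
      by simp_all
    then show ?thesis
      using lm(2) lp(2) unfolding abs_le_iff by linarith
  qed
  show "(\<lambda>m. measure M {w \<in> space M. e < \<bar>lamhat m w - lamstar\<bar>}) \<longlonglongrightarrow> 0"
  proof (rule measure_tendsto_0_if_subset_Un)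
    show "{w \<in> space M. e < \<bar>lamhat m w - lamstar\<bar>} \<subseteq> bad_Rhat m \<union> bad_b m" for m
      using good[of _ m] by fastforce
    have "(\<lambda>w. SUP l\<in>Lam. ereal \<bar>Rhat m l w - R l\<bar>) \<in> borel_measurable M"
      and "(\<lambda>w. SUP l\<in>Lam. ereal (b m l w)) \<in> borel_measurable M" for m
      using Rhat_conv b_conv unfolding conv_prob_zero_ereal_def by blast+
    then show "bad_Rhat m \<in> sets M" "bad_b m \<in> sets M" for m
      unfolding bad_Rhat_def bad_b_def by measurable
    show "(\<lambda>m. measure M (bad_Rhat m)) \<longlonglongrightarrow> 0" "(\<lambda>m. measure M (bad_b m)) \<longlonglongrightarrow> 0"
      using Rhat_conv b_conv \<open>0 < eta\<close>
      unfolding conv_prob_zero_ereal_def bad_Rhat_def bad_b_def by auto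
  qed
qed

theorem proposition3p3:
  fixes P :: "('x \<times> 'y) measure"
    and C :: "real \<Rightarrow> 'x \<Rightarrow> 'y set"
    and Lam :: "real set"
    and M :: "'w measure"
    and alpha :: real
    and delta :: "nat \<Rightarrow> real"
    and lamDCO :: "nat \<Rightarrow> 'w \<Rightarrow> real"
    and Rhat :: "nat \<Rightarrow> real \<Rightarrow> 'w \<Rightarrow> real"
    and b :: "nat \<Rightarrow> real \<Rightarrow> real \<Rightarrow> 'w \<Rightarrow> real"
  defines "lamstar \<equiv> Inf {l \<in> Lam. risk P C l \<le> alpha}"
    and "lamCRC \<equiv> (\<lambda>m w. Inf {l \<in> Lam. Rhat m l w + b m l (delta m) w \<le> alpha})"
  assumes "prob_space P"
    and "\<And>l. l \<in> Lam \<Longrightarrow> {p \<in> space P. snd p \<notin> C l (fst p)} \<in> sets P"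
    and nested: "\<And>l1 l2 x. l1 \<in> Lam \<Longrightarrow> l2 \<in> Lam \<Longrightarrow> l1 \<le> l2 \<Longrightarrow> C l1 x \<subseteq> C l2 x"
    and "0 < alpha" "alpha < 1"
    and "\<And>m. 0 < delta m \<and> delta m < 1"
    and "{l \<in> Lam. risk P C l \<le> alpha} \<noteq> {}"
    and "bdd_below {l \<in> Lam. risk P C l \<le> alpha}"
    and A1: "\<exists>d>0. {lamstar - d <..< lamstar + d} \<subseteq> Lam \<and>
               continuous_on {lamstar - d <..< lamstar + d} (risk P C) \<and>
               (\<forall>l1 \<in> {lamstar - d <..< lamstar + d}. \<forall>l2 \<in> {lamstar - d <..< lamstar + d}.
                  l1 < l2 \<longrightarrow> risk P C l2 < risk P C l1)"
    and "prob_space M"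
    and A2: "conv_prob M lamDCO lamstar"
    and bnn: "\<And>m l w. l \<in> Lam \<Longrightarrow> w \<in> space M \<Longrightarrow> 0 \<le> b m l (delta m) w"
    and A3a: "conv_prob_zero_ereal M (\<lambda>m w. SUP l\<in>Lam. ereal \<bar>Rhat m l w - risk P C l\<bar>)"
    and A3b: "conv_prob_zero_ereal M (\<lambda>m w. SUP l\<in>Lam. ereal (b m l (delta m) w))"
    and "\<And>m. lamCRC m \<in> borel_measurable M"
  shows "conv_prob M (\<lambda>m w. lamCRC m w - lamDCO m w) 0"
proof -
  have M: "finite_measure M"
    using \<open>prob_space M\<close> by (rule prob_space.finite_measure)
  have antimono: "risk P C l2 \<le> risk P C l1" if "l1 \<in> Lam" "l2 \<in> Lam" "l1 \<le> l2" for l1 l2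
    using risk_antimono[OF \<open>prob_space P\<close> assms(4) nested that] .
  obtain d where d: "0 < d" "{lamstar - d <..< lamstar + d} \<subseteq> Lam"
    and strict: "\<forall>l1 \<in> {lamstar - d <..< lamstar + d}. \<forall>l2 \<in> {lamstar - d <..< lamstar + d}.
      l1 < l2 \<longrightarrow> risk P C l2 < risk P C l1"
    using A1 by blast
  have crosses: "crosses_level_at (risk P C) Lam alpha lamstar"
    unfolding lamstar_def
    using crosses_level_at_Inf_sublevel[OF assms(9,10) d[unfolded lamstar_def]] strict[unfolded lamstar_def]
    by blast
  have CRC: "conv_prob M lamCRC lamstar"
    unfolding lamCRC_def
    by (rule conv_prob_Inf_sublevel_estimate[where b = "\<lambda>m l. b m l (delta m)",
          OF M antimono crosses bnn A3a A3b \<open>\<And>m. lamCRC m \<in> borel_measurable M\<close>[unfolded lamCRC_def]])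
  show ?thesis
    using M CRC A2 by (rule conv_prob_diff)
qed

end
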